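(* Let $\alpha>-1$ and define $c_1^*(\alpha,x)=0$ and, for $i=1,2,3,\ldots$, $$c_{2i}^*(\alpha,x)=\frac{4(-1)^{i+1}}{(2i)!}\binom{\alpha+1}{i-1}\,{}_2F_1\!\left(\begin{matrix}-i+1,\;\alpha+\frac52-i\\ \frac12\end{matrix};x^2\right),$$ $$c_{2i+1}^*(\alpha,x)=\frac{8(-1)^{i+1}}{(2i+1)!}\binom{\alpha}{i-1}(\alpha+1)\,x\,{}_2F_1\!\left(\begin{matrix}-i+1,\;\alpha+\frac52-i\\ \frac32\end{matrix};x^2\right).$$ Then $$\sum_{i=1}^\infty c_i^*(\alpha,-1)=2\,{}_1F_1\!\left(\begin{matrix}-\alpha-1\\ 3\end{matrix};2\right),\qquad \sum_{i=1}^\infty c_i^*(\alpha,1)=2\,{}_1F_1\!\left(\begin{matrix}-\alpha-1\\ 3\end{matrix};-2\right).$$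
   Context: $(a)_k$ is the Pochhammer symbol, $\binom{\gamma}{m}$ the generalized binomial coefficient, ${}_2F_1$ and ${}_1F_1$ the standard hypergeometric series $\sum_k\frac{(a)_k(b)_k}{(c)_k}\frac{z^k}{k!}$ and $\sum_k\frac{(a)_k}{(b)_k}\frac{z^k}{k!}$; the ${}_2F_1$'s above terminate. *)

theory Defs
  imports "HOL-Analysis.Analysis"
begin

definition hyp2F1 :: "real \<Rightarrow> real \<Rightarrow> real \<Rightarrow> real \<Rightarrow> real" where
  "hyp2F1 a b c z =
     (\<Sum>k. pochhammer a k * pochhammer b k / pochhammer c k * z ^ k / fact k)"

definition hyp1F1 :: "real \<Rightarrow> real \<Rightarrow> real \<Rightarrow> real" where
  "hyp1F1 a b z = (\<Sum>k. pochhammer a k / pochhammer b k * z ^ k / fact k)"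

text \<open>The coefficients c_n^*(alpha,x), n \<ge> 1 (c_1^* = 0; the value at n = 0 is
  irrelevant and set to 0). For n = 2i and n = 2i+1 with i \<ge> 1 as in the paper.\<close>
definition cstar :: "real \<Rightarrow> real \<Rightarrow> nat \<Rightarrow> real" where
  "cstar \<alpha> x n =
     (if n \<le> 1 then 0
      else if even n then
        (let i = n div 2 in
          4 * (-1) ^ (i + 1) / fact (2 * i) * ((\<alpha> + 1) gchoose (i - 1))
            * hyp2F1 (- real i + 1) (\<alpha> + 5 / 2 - real i) (1 / 2) (x ^ 2))
      else
        (let i = n div 2 in
          8 * (-1) ^ (i + 1) / fact (2 * i + 1) * (\<alpha> gchoose (i - 1)) * (\<alpha> + 1) * x
            * hyp2F1 (- real i + 1) (\<alpha> + 5 / 2 - real i) (3 / 2) (x ^ 2)))"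

end

theory Submission
  imports Defs "HOL-Real_Asymp.Real_Asymp"
begin

text \<open>At \<open>x = \<plusminus>1\<close> the terminating \<open>\<^sub>2F\<^sub>1\<close> factors are evaluated by
  Chu--Vandermonde. Combined with the duplication formula \<open>(2m)! = 4\<^sup>m m! (1/2)\<^sub>m\<close>
  and the splitting \<open>(a)\<^sub>2\<^sub>m = (a)\<^sub>m (a+m)\<^sub>m\<close>, this shows that
  \<open>c\<^sup>*\<^sub>k\<^sub>+\<^sub>2(\<alpha>,x)\<close> is exactly twice the \<open>k\<close>-th term of \<open>\<^sub>1F\<^sub>1(-\<alpha>-1;3;-2x)\<close>,
  and \<open>c\<^sup>*\<^sub>1 = 0\<close> absorbs the index shift. The identity therefore holds for every
  real \<open>\<alpha>\<close>.\<close>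

definition hyp1F1_term :: "real \<Rightarrow> real \<Rightarrow> real \<Rightarrow> nat \<Rightarrow> real" where
  "hyp1F1_term a b z k = pochhammer a k / pochhammer b k * z ^ k / fact k"

text \<open>No condition on \<open>b\<close> is needed: once \<open>(b)\<^sub>k\<close> vanishes, both sides are \<open>0\<close>
  because division by zero yields zero.\<close>

lemma hyp1F1_term_Suc:
  "hyp1F1_term a b z (Suc k) =
     hyp1F1_term a b z k * ((a + real k) * z / ((b + real k) * (real k + 1)))"
  by (cases "pochhammer b k = 0") (simp_all add: hyp1F1_term_def pochhammer_Suc field_simps)

lemma hyp1F1_sums: "hyp1F1_term a b z sums hyp1F1 a b z"
proof -
  have "(\<lambda>k. (a + real k) * z / ((b + real k) * (real k + 1))) \<longlonglongrightarrow> 0"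
    by real_asymp
  then have "eventually (\<lambda>k. norm ((a + real k) * z / ((b + real k) * (real k + 1))) < 1/2)
      sequentially"
    by (intro order_tendstoD(2)[OF tendsto_norm_zero]) simp_all
  then obtain N where small: "\<And>k. k \<ge> N \<Longrightarrow>
      norm ((a + real k) * z / ((b + real k) * (real k + 1))) \<le> 1/2"
    unfolding eventually_sequentially by (blast intro: less_imp_le)
  then have "summable (hyp1F1_term a b z)"
  proof (intro summable_ratio_test[of "1/2" N])
    fix k assume "k \<ge> N"
    from small[OF this] show "norm (hyp1F1_term a b z (Suc k)) \<le> 1/2 * norm (hyp1F1_term a b z k)"
      unfolding hyp1F1_term_Suc norm_mult mult.commute[of "1/2"] by (intro mult_left_mono) simp_all
  qed simp
  then show ?thesis
    unfolding hyp1F1_def hyp1F1_term_def[abs_def] by (simp add: summable_sums)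
qed

lemma hyp2F1_neg_nat_at_1:
  fixes b c :: real
  assumes "\<And>i. i < m \<Longrightarrow> c \<noteq> - real i"
  shows "hyp2F1 (- real m) b c 1 = pochhammer (c - b) m / pochhammer c m"
proof -
  let ?f = "\<lambda>k. pochhammer (- real m) k * pochhammer b k / pochhammer c k * 1 ^ k / fact k"
  have "?f sums (\<Sum>k\<le>m. ?f k)"
    by (rule sums_finite) (auto simp: pochhammer_of_nat_eq_0_lemma)
  also have "(\<Sum>k\<le>m. ?f k) =
      (\<Sum>k\<le>m. pochhammer b k * pochhammer (- real m) k / (of_nat (fact k) * pochhammer c k))"
    by (simp add: field_simps)
  also have "\<dots> = pochhammer (c - b) m / pochhammer c m"
    using Vandermonde_pochhammer[of m c b] assms by (simp add: atLeast0AtMost)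
  finally show ?thesis
    unfolding hyp2F1_def by (simp add: sums_iff)
qed

lemma fact_Suc_Suc_eq_pochhammer_3: "fact (Suc (Suc k)) = (2::real) * pochhammer 3 k"
  by (simp add: pochhammer_fact pochhammer_rec numeral_3_eq_3 numeral_2_eq_2)

lemma fact_odd_eq_pochhammer: "fact (2 * m + 1) = (4::real) ^ m * fact m * pochhammer (3/2) m"
proof -
  have "fact (2 * m + 1) = pochhammer (2 * 1 :: real) (2 * m)"
    by (simp add: pochhammer_fact pochhammer_rec)
  also have "\<dots> = of_nat (2 ^ (2 * m)) * pochhammer 1 m * pochhammer (1 + 1/2) m"
    by (rule pochhammer_double)
  finally show ?thesis
    by (simp add: pochhammer_fact power_mult)
qed

lemma cstar_even_at_unit:
  fixes \<alpha> x :: real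
  assumes x: "x\<^sup>2 = 1"
  shows "cstar \<alpha> x (2 * m + 2) = 2 * hyp1F1_term (- \<alpha> - 1) 3 (- 2 * x) (2 * m)"
proof -
  have F: "hyp2F1 (- real (Suc m) + 1) (\<alpha> + 5/2 - real (Suc m)) (1/2) (x\<^sup>2)
      = pochhammer (real m - (\<alpha> + 1)) m / pochhammer (1/2) m"
    using hyp2F1_neg_nat_at_1[of m "1/2" "\<alpha> + 5/2 - real (Suc m)"] x by (simp add: algebra_simps)
  have c: "cstar \<alpha> x (2 * m + 2) =
      4 * (-1) ^ m / (2 * pochhammer 3 (2 * m)) * ((\<alpha> + 1) gchoose m)
      * (pochhammer (real m - (\<alpha> + 1)) m / pochhammer (1/2) m)"
    using F fact_Suc_Suc_eq_pochhammer_3[of "2 * m"]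
    by (simp add: cstar_def Let_def mult_ac del: fact_Suc)
  have split: "pochhammer (- \<alpha> - 1) (2 * m) =
      pochhammer (- (\<alpha> + 1)) m * pochhammer (real m - (\<alpha> + 1)) m"
  proof -
    have neg: "- \<alpha> - 1 = - (\<alpha> + 1)"
      by simp
    show ?thesis
      using pochhammer_product'[of "- (\<alpha> + 1)" m m] unfolding neg mult_2 by (simp add: algebra_simps)
  qed
  have pos: "pochhammer (1/2::real) m > 0" "pochhammer (3::real) (2 * m) > 0"
    by (auto intro: pochhammer_pos)
  have pw: "(- 2 * x) ^ (2 * m) = (4::real) ^ m"
    using x by (simp add: power_mult power_mult_distrib)
  show ?thesis
    unfolding c split pw hyp1F1_term_def gbinomial_pochhammer fact_double
      power_mult[of "2::real" 2 m]
    using pos by (simp add: field_simps power_mult flip: power_add mult_2)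
qed

lemma cstar_odd_at_unit:
  fixes \<alpha> x :: real
  assumes x: "x\<^sup>2 = 1"
  shows "cstar \<alpha> x (2 * m + 3) = 2 * hyp1F1_term (- \<alpha> - 1) 3 (- 2 * x) (2 * m + 1)"
proof -
  have F: "hyp2F1 (- real (Suc m) + 1) (\<alpha> + 5/2 - real (Suc m)) (3/2) (x\<^sup>2)
      = pochhammer (real m - \<alpha>) m / pochhammer (3/2) m"
    using hyp2F1_neg_nat_at_1[of m "3/2" "\<alpha> + 5/2 - real (Suc m)"] x by (simp add: algebra_simps)
  have "(2 * m + 3) div 2 = Suc m" "odd (2 * m + 3)"
    by simp_all
  then have c: "cstar \<alpha> x (2 * m + 3) =
      8 * (-1) ^ m / (2 * pochhammer 3 (2 * m + 1)) * (\<alpha> gchoose m) * (\<alpha> + 1) * x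
      * (pochhammer (real m - \<alpha>) m / pochhammer (3/2) m)"
    using F fact_Suc_Suc_eq_pochhammer_3[of "2 * m + 1"] unfolding cstar_def
    by (simp add: Let_def mult_ac del: fact_Suc)
  have split: "pochhammer (- \<alpha> - 1) (2 * m + 1) =
      (- \<alpha> - 1) * (pochhammer (- \<alpha>) m * pochhammer (real m - \<alpha>) m)"
    using pochhammer_product'[of "- \<alpha>" m m] by (simp add: pochhammer_rec mult_2)
  have pos: "pochhammer (3/2::real) m > 0" "pochhammer (3::real) (2 * m + 1) > 0"
    by (auto intro: pochhammer_pos)
  have sq: "((-1::real) ^ m)\<^sup>2 = 1"
    by (simp add: power2_eq_square flip: power_add)
  have pw: "(- 2 * x) ^ (2 * m + 1) = - 2 * (4::real) ^ m * x"
    using x by (simp add: power_mult power_mult_distrib)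
  show ?thesis
    unfolding c split pw hyp1F1_term_def gbinomial_pochhammer fact_odd_eq_pochhammer
    using pos sq by (simp add: field_simps)
qed

lemma cstar_Suc_Suc_at_unit:
  fixes \<alpha> x :: real
  assumes "x\<^sup>2 = 1"
  shows "cstar \<alpha> x (Suc (Suc k)) = 2 * hyp1F1_term (- \<alpha> - 1) 3 (- 2 * x) k"
proof (cases "even k")
  case True
  then obtain m where "k = 2 * m" by blast
  then show ?thesis
    using cstar_even_at_unit[OF assms, of \<alpha> m] by (simp add: add.commute)
next
  case False
  then obtain m where k: "k = 2 * m + 1" by (blast elim: oddE)
  then have "Suc (Suc k) = 2 * m + 3" by simp
  then show ?thesis
    unfolding k by (simp only: cstar_odd_at_unit[OF assms])
qed

lemma cstar_sums_at_unit:
  fixes \<alpha> x :: real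
  assumes "x\<^sup>2 = 1"
  shows "(\<lambda>n. cstar \<alpha> x (Suc n)) sums (2 * hyp1F1 (- \<alpha> - 1) 3 (- 2 * x))"
proof -
  have "(\<lambda>k. cstar \<alpha> x (Suc (Suc k))) sums (2 * hyp1F1 (- \<alpha> - 1) 3 (- 2 * x))"
    using sums_mult[OF hyp1F1_sums, of 2] by (simp add: cstar_Suc_Suc_at_unit[OF assms])
  moreover have "cstar \<alpha> x (Suc 0) = 0"
    by (simp add: cstar_def)
  ultimately show ?thesis
    using sums_Suc_iff[of "\<lambda>n. cstar \<alpha> x (Suc n)"] by simp
qed

theorem mainTheorem6:
  fixes \<alpha> :: real
  assumes "\<alpha> > -1"
  shows "((\<lambda>n. cstar \<alpha> (-1) (Suc n)) sums (2 * hyp1F1 (- \<alpha> - 1) 3 2))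
    \<and> ((\<lambda>n. cstar \<alpha> 1 (Suc n)) sums (2 * hyp1F1 (- \<alpha> - 1) 3 (-2)))"
  using cstar_sums_at_unit[of "-1" \<alpha>] cstar_sums_at_unit[of 1 \<alpha>] by simp

end
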